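(* For any symmetric matrices $M_1,\dots,M_N\in\mathbb{R}^{d\times d}$ and vectors $\bar z_1,\dots,\bar z_N\in\mathbb{R}^d$, there exist differentiable functions $f_1,\dots,f_N:\mathbb{R}^d\to\mathbb{R}$ such that (1) each $f_n$ is $M_n$-matrix-smooth and has a stationary point at $\bar z_n$, and (2) for every standardized $s$ on $\mathbb{R}^d$ with $\mathbb{E}[\mathsf{u}_i^4]=\kappa<\infty$, every distribution $\pi$ on $\{1,\dots,N\}$ with all $\pi(n)>0$, and every $w=(m,C)$, the estimator $\mathsf{g}=\frac{1}{\pi(\mathsf{n})}\nabla_w f_{\mathsf{n}}(T_w(\mathsf{u}))$ (with $\mathsf{u}\sim s$ and $\mathsf{n}\sim\pi$ independent) satisfies \[ \operatorname{tr}\mathbb{V}[\mathsf{g}]\ \ge\ \sum_{n=1}^N\frac{1}{\pi(n)}\Big(d\,\|M_n(m-\bar z_n)\|_2^2+(d+\kappa-1)\|M_nC\|_F^2\Big). \]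
   Context: $\mathbb{V}[\mathsf{g}]$ is the covariance matrix of the random vector $\mathsf{g}$, so $\operatorname{tr}\mathbb{V}[\mathsf{g}]=\mathbb{E}\|\mathsf{g}\|_2^2-\|\mathbb{E}\mathsf{g}\|_2^2$. For a symmetric matrix $M$, $f$ is $M$-matrix-smooth if $\|\nabla f(y)-\nabla f(z)\|_2\le\|M(y-z)\|_2$ for all $y,z$. $T_w(u)=Cu+m$ for $w=(m,C)$, $m\in\mathbb{R}^d$, $C\in\mathbb{R}^{d\times d}$, with $w$ regarded as the vector of all $d+d^2$ entries and $\nabla_w$ the gradient with respect to them. A distribution $s$ on $\mathbb{R}^d$ is standardized if for $\mathsf{u}\sim s$ the components are i.i.d. with $\mathbb{E}\mathsf{u}_1=\mathbb{E}\mathsf{u}_1^3=0$ and $\mathrm{Var}(\mathsf{u}_1)=1$. $\|\cdot\|_F$ is the Frobenius norm. *)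

theory Defs
  imports "HOL-Probability.Probability"
begin

text \<open>Gradient of a real-valued function on a real inner product space (well defined
  when the function is differentiable).\<close>
definition grad :: "('a::real_inner \<Rightarrow> real) \<Rightarrow> 'a \<Rightarrow> 'a" where
  "grad f x = (THE D. GDERIV f x :> D)"

definition symmetric_mat :: "real^'d^'d \<Rightarrow> bool" where
  "symmetric_mat M \<longleftrightarrow> transpose M = M"

definition matrix_smooth :: "real^'d^'d \<Rightarrow> (real^'d \<Rightarrow> real) \<Rightarrow> bool" where
  "matrix_smooth M f \<longleftrightarrow> (\<forall>y z. norm (grad f y - grad f z) \<le> norm (M *v (y - z)))"

definition T_aff :: "(real^'d) \<times> (real^'d^'d) \<Rightarrow> real^'d \<Rightarrow> real^'d" where
  "T_aff w u = snd w *v u + fst w"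

definition grad_w :: "(real^'d \<Rightarrow> real) \<Rightarrow> (real^'d) \<times> (real^'d^'d) \<Rightarrow> real^'d
    \<Rightarrow> (real^'d) \<times> (real^'d^'d)" where
  "grad_w f w u = grad (\<lambda>w'. f (T_aff w' u)) w"

definition frob_norm :: "real^'d^'d \<Rightarrow> real" where
  "frob_norm A = sqrt (\<Sum>i\<in>UNIV. \<Sum>j\<in>UNIV. (A $ i $ j)^2)"

definition standardized :: "(real^'d) measure \<Rightarrow> real \<Rightarrow> bool" where
  "standardized s \<kappa> \<longleftrightarrow>
     prob_space s \<and> sets s = sets borel \<and>
     prob_space.indep_vars s (\<lambda>_. borel) (\<lambda>i u. u $ i) UNIV \<and>
     (\<forall>i j. distr s borel (\<lambda>u. u $ i) = distr s borel (\<lambda>u. u $ j)) \<and>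
     (\<forall>i. integrable s (\<lambda>u. (u $ i)^4) \<and>
          (\<integral>u. u $ i \<partial>s) = 0 \<and> (\<integral>u. (u $ i)^3 \<partial>s) = 0 \<and>
          (\<integral>u. (u $ i)^2 \<partial>s) = 1 \<and> (\<integral>u. (u $ i)^4 \<partial>s) = \<kappa>)"

definition pos_distribution :: "('k::finite \<Rightarrow> real) \<Rightarrow> bool" where
  "pos_distribution p \<longleftrightarrow> (\<forall>n. p n > 0) \<and> sum p UNIV = 1"

definition estimator :: "('k \<Rightarrow> real^'d \<Rightarrow> real) \<Rightarrow> ('k \<Rightarrow> real) \<Rightarrow>
    (real^'d) \<times> (real^'d^'d) \<Rightarrow> real^'d \<Rightarrow> 'k \<Rightarrow> (real^'d) \<times> (real^'d^'d)" where
  "estimator f p w u n = (1 / p n) *\<^sub>R grad_w (f n) w u"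

text \<open>tr V[g] = E||g||^2 - ||E g||^2, where u ~ s and n ~ p independently.\<close>
definition trace_var :: "(real^'d) measure \<Rightarrow> ('k::finite \<Rightarrow> real) \<Rightarrow>
    (real^'d \<Rightarrow> 'k \<Rightarrow> (real^'d) \<times> (real^'d^'d)) \<Rightarrow> real" where
  "trace_var s p g =
     (\<Sum>n\<in>UNIV. p n * (\<integral>u. (norm (g u n))^2 \<partial>s))
     - (norm (\<Sum>n\<in>UNIV. p n *\<^sub>R (\<integral>u. g u n \<partial>s)))^2"

end

theory Submission
  imports Defs
begin

text \<open>Take \<open>f\<^sub>n(z) = (z - z\<^sub>n)\<^sup>T M\<^sub>n (z - z\<^sub>n) / 2\<close>. With \<open>v = M\<^sub>n (C u + m - z\<^sub>n) = a + B u\<close>,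
  where \<open>a = M\<^sub>n (m - z\<^sub>n)\<close> and \<open>B = M\<^sub>n C\<close>, the chain rule gives \<open>\<nabla>\<^sub>w f\<^sub>n(T\<^sub>w u) = (v, v u\<^sup>T)\<close>,
  whose squared norm is \<open>\<parallel>v\<parallel>\<^sup>2 (1 + \<parallel>u\<parallel>\<^sup>2)\<close>. Since \<open>v\<close> is affine in \<open>u\<close>, only moments of order at
  most four of the independent coordinates enter, and they give
  \<open>E \<parallel>\<nabla>\<^sub>w f\<^sub>n\<parallel>\<^sup>2 = (d + 1) \<parallel>a\<parallel>\<^sup>2 + (d + \<kappa>) \<parallel>B\<parallel>\<^sub>F\<^sup>2\<close> and \<open>E \<nabla>\<^sub>w f\<^sub>n = (a, B)\<close>.
  The weighted Cauchy--Schwarz inequality \<open>\<parallel>\<Sum>\<^sub>n x\<^sub>n\<parallel>\<^sup>2 \<le> \<Sum>\<^sub>n \<parallel>x\<^sub>n\<parallel>\<^sup>2 / \<pi>(n)\<close> bounds the squared mean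
  of the estimator by \<open>\<Sum>\<^sub>n (\<parallel>a\<parallel>\<^sup>2 + \<parallel>B\<parallel>\<^sub>F\<^sup>2) / \<pi>(n)\<close>; subtracting it from the second moment leaves the
  claimed bound.\<close>

section \<open>Moments of a standardized distribution\<close>

text \<open>Moments of order \<open>k \<le> 4\<close> of a coordinate of a standardized distribution with fourth moment
  \<open>\<kappa>\<close>; the values for \<open>k > 4\<close> are junk.\<close>
definition std_moment :: "real \<Rightarrow> nat \<Rightarrow> real" where
  "std_moment \<kappa> k = (if k = 0 \<or> k = 2 then 1 else if k = 4 then \<kappa> else 0)"

lemma standardized_prob_space: "standardized s \<kappa> \<Longrightarrow> prob_space s"
  by (simp add: standardized_def)

lemma measurable_continuous_sets_borel:
  assumes "sets M = sets borel" and "continuous_on UNIV f"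
  shows "f \<in> borel_measurable M"
  using borel_measurable_continuous_onI[OF assms(2)] by (simp add: measurable_cong_sets[OF assms(1) refl])

lemma abs_power_le_1_plus_power4:
  fixes x :: real
  assumes "k \<le> 4"
  shows "\<bar>x\<bar> ^ k \<le> 1 + x ^ 4"
proof (cases "\<bar>x\<bar> \<le> 1")
  case True
  then have "\<bar>x\<bar> ^ k \<le> 1" by (simp add: power_le_one)
  then show ?thesis by (simp add: add_increasing2)
next
  case False
  then have "\<bar>x\<bar> ^ k \<le> \<bar>x\<bar> ^ 4" using assms by (intro power_increasing) auto
  then show ?thesis by (simp add: power_abs)
qed

lemma standardized_coord_power:
  assumes std: "standardized s \<kappa>" and "k \<le> 4"
  shows "integrable s (\<lambda>u::real^'d. (u$i)^k)" and "(\<integral>u. (u$i)^k \<partial>s) = std_moment \<kappa> k"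
proof -
  interpret prob_space s using std by (rule standardized_prob_space)
  have st: "sets s = sets borel" "integrable s (\<lambda>u. (u$i)^4)"
    "(\<integral>u. u$i \<partial>s) = 0" "(\<integral>u. (u$i)^3 \<partial>s) = 0"
    "(\<integral>u. (u$i)^2 \<partial>s) = 1" "(\<integral>u. (u$i)^4 \<partial>s) = \<kappa>"
    using std unfolding standardized_def by auto
  show "integrable s (\<lambda>u::real^'d. (u$i)^k)"
  proof (rule Bochner_Integration.integrable_bound)
    show "integrable s (\<lambda>u. 1 + (u$i)^4)" using st(2) by simp
    show "(\<lambda>u::real^'d. (u$i)^k) \<in> borel_measurable s"
      by (rule measurable_continuous_sets_borel[OF st(1)]) (intro continuous_intros)
    show "AE u in s. norm ((u$i)^k) \<le> norm (1 + (u$i)^4)"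
      using abs_power_le_1_plus_power4[OF \<open>k \<le> 4\<close>] by (auto simp: power_abs)
  qed
  have "k \<in> {0, 1, 2, 3, 4}" using \<open>k \<le> 4\<close> by auto
  then show "(\<integral>u. (u$i)^k \<partial>s) = std_moment \<kappa> k"
    using st by (auto simp: std_moment_def prob_space)
qed

lemma standardized_monomial:
  fixes e :: "'d::finite \<Rightarrow> nat"
  assumes std: "standardized s \<kappa>" and "\<And>i. e i \<le> 4"
  shows "integrable s (\<lambda>u::real^'d. \<Prod>i\<in>UNIV. (u$i)^(e i))"
    and "(\<integral>u. (\<Prod>i\<in>UNIV. (u$i)^(e i)) \<partial>s) = (\<Prod>i\<in>UNIV. std_moment \<kappa> (e i))"
proof -
  interpret prob_space s using std by (rule standardized_prob_space)
  have "indep_vars (\<lambda>_. borel) (\<lambda>i u. u$i) UNIV"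
    using std unfolding standardized_def by auto
  then have indep: "indep_vars (\<lambda>_. borel) (\<lambda>i u::real^'d. (u$i)^(e i)) UNIV"
    by (rule indep_vars_compose2) (intro borel_measurable_continuous_onI continuous_intros)
  have coord: "integrable s (\<lambda>u::real^'d. (u$i)^(e i))" "(\<integral>u. (u$i)^(e i) \<partial>s) = std_moment \<kappa> (e i)"
    for i using standardized_coord_power[OF std assms(2)] by auto
  show "integrable s (\<lambda>u::real^'d. \<Prod>i\<in>UNIV. (u$i)^(e i))"
    by (rule indep_vars_integrable[OF _ indep]) (use coord in auto)
  have "(\<integral>u. (\<Prod>i\<in>UNIV. (u$i)^(e i)) \<partial>s) = (\<Prod>i\<in>UNIV. \<integral>u. (u$i)^(e i) \<partial>s)"
    by (rule indep_vars_lebesgue_integral[OF _ indep]) (use coord in auto)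
  also have "\<dots> = (\<Prod>i\<in>UNIV. std_moment \<kappa> (e i))"
    using coord by simp
  finally show "(\<integral>u. (\<Prod>i\<in>UNIV. (u$i)^(e i)) \<partial>s) = (\<Prod>i\<in>UNIV. std_moment \<kappa> (e i))" .
qed

lemma prod_power_count_list:
  fixes x :: "'d::finite \<Rightarrow> 'a::comm_monoid_mult"
  shows "(\<Prod>i\<in>UNIV. x i ^ count_list xs i) = prod_list (map x xs)"
proof (induction xs)
  case (Cons y xs)
  have "(\<Prod>i\<in>UNIV. x i ^ count_list (y # xs) i) = (\<Prod>i\<in>UNIV. (if i = y then x i else 1) * x i ^ count_list xs i)"
    by (intro prod.cong) auto
  also have "\<dots> = x y * (\<Prod>i\<in>UNIV. x i ^ count_list xs i)"
    by (simp add: prod.distrib prod.delta)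
  finally show ?case using Cons by simp
qed simp

lemma standardized_list_moment:
  assumes "standardized s \<kappa>" and "length xs \<le> 4"
  shows "integrable s (\<lambda>u::real^'d::finite. prod_list (map (\<lambda>j. u$j) xs))"
    and "(\<integral>u. prod_list (map (\<lambda>j. u$j) xs) \<partial>s) = (\<Prod>i\<in>UNIV. std_moment \<kappa> (count_list xs i))"
  using standardized_monomial[OF assms(1), of "count_list xs"] count_le_length[of xs] assms(2)
  by (auto simp: prod_power_count_list intro: le_trans)

lemma prod_std_moment_eq_0:
  "std_moment \<kappa> (e j) = 0 \<Longrightarrow> (\<Prod>i\<in>(UNIV::'d::finite set). std_moment \<kappa> (e i)) = 0"
  by (rule prod_zero) auto

lemma prod_std_moment_single:
  "(\<And>i. i \<noteq> j \<Longrightarrow> e i = 0) \<Longrightarrow>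
    (\<Prod>i\<in>(UNIV::'d::finite set). std_moment \<kappa> (e i)) = std_moment \<kappa> (e j)"
  by (subst prod.remove[of _ j]) (auto simp: std_moment_def intro!: prod.neutral)

lemma prod_std_moment_pair:
  assumes "j \<noteq> l" and "\<And>i. i \<noteq> j \<Longrightarrow> i \<noteq> l \<Longrightarrow> e i = 0"
  shows "(\<Prod>i\<in>(UNIV::'d::finite set). std_moment \<kappa> (e i)) = std_moment \<kappa> (e j) * std_moment \<kappa> (e l)"
proof -
  have "(\<Prod>i\<in>UNIV - {j} - {l}. std_moment \<kappa> (e i)) = 1"
    using assms(2) by (intro prod.neutral) (auto simp: std_moment_def)
  then show ?thesis
    using assms(1) by (simp add: prod.remove[of UNIV j] prod.remove[of "UNIV - {j}" l])
qed

lemma standardized_moment1: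
  assumes "standardized s \<kappa>"
  shows "integrable s (\<lambda>u::real^'d::finite. u$j)" and "(\<integral>u. u$j \<partial>s) = 0"
  using standardized_coord_power[OF assms, of 1 j] by (auto simp: std_moment_def)

lemma standardized_moment2:
  assumes "standardized s \<kappa>"
  shows "integrable s (\<lambda>u::real^'d::finite. u$j * u$k)"
    and "(\<integral>u. u$j * u$k \<partial>s) = (if j = k then 1 else 0)"
proof -
  show "integrable s (\<lambda>u::real^'d. u$j * u$k)"
    using standardized_list_moment(1)[OF assms, of "[j, k]"] by simp
  have "(\<integral>u. u$j * u$k \<partial>s) = (\<Prod>i\<in>UNIV. std_moment \<kappa> (count_list [j, k] i))"
    using standardized_list_moment(2)[OF assms, of "[j, k]"] by simp
  also have "\<dots> = (if j = k then 1 else 0)"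
  proof (cases "j = k")
    case True
    then show ?thesis by (subst prod_std_moment_single[where j = j]) (auto simp: std_moment_def)
  next
    case False
    then show ?thesis by (subst prod_std_moment_eq_0[where j = j]) (auto simp: std_moment_def)
  qed
  finally show "(\<integral>u. u$j * u$k \<partial>s) = (if j = k then 1 else 0)" .
qed

lemma standardized_moment3:
  assumes "standardized s \<kappa>"
  shows "integrable s (\<lambda>u::real^'d::finite. u$j * (u$l * u$l))"
    and "(\<integral>u. u$j * (u$l * u$l) \<partial>s) = 0"
proof -
  show "integrable s (\<lambda>u::real^'d. u$j * (u$l * u$l))"
    using standardized_list_moment(1)[OF assms, of "[j, l, l]"] by simp
  have "(\<integral>u. u$j * (u$l * u$l) \<partial>s) = (\<Prod>i\<in>UNIV. std_moment \<kappa> (count_list [j, l, l] i))"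
    using standardized_list_moment(2)[OF assms, of "[j, l, l]"] by simp
  also have "\<dots> = 0"
    by (rule prod_std_moment_eq_0[where j = j]) (simp add: std_moment_def)
  finally show "(\<integral>u. u$j * (u$l * u$l) \<partial>s) = 0" .
qed

lemma standardized_moment4:
  assumes "standardized s \<kappa>"
  shows "integrable s (\<lambda>u::real^'d::finite. u$j * (u$k * (u$l * u$l)))"
    and "(\<integral>u. u$j * (u$k * (u$l * u$l)) \<partial>s) = (if j = k then if j = l then \<kappa> else 1 else 0)"
proof -
  show "integrable s (\<lambda>u::real^'d. u$j * (u$k * (u$l * u$l)))"
    using standardized_list_moment(1)[OF assms, of "[j, k, l, l]"] by simp
  have "(\<integral>u. u$j * (u$k * (u$l * u$l)) \<partial>s) = (\<Prod>i\<in>UNIV. std_moment \<kappa> (count_list [j, k, l, l] i))"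
    using standardized_list_moment(2)[OF assms, of "[j, k, l, l]"] by simp
  also have "\<dots> = (if j = k then if j = l then \<kappa> else 1 else 0)"
  proof -
    consider "j = k" "j = l" | "j = k" "j \<noteq> l" | "j \<noteq> k" "k = l" | "j \<noteq> k" "k \<noteq> l"
      by blast
    then show ?thesis
    proof cases
      case 1
      then show ?thesis by (subst prod_std_moment_single[where j = j]) (auto simp: std_moment_def)
    next
      case 2
      then show ?thesis by (subst prod_std_moment_pair[where j = j and l = l]) (auto simp: std_moment_def)
    next
      case 3
      then show ?thesis by (subst prod_std_moment_eq_0[where j = j]) (auto simp: std_moment_def)
    next
      case 4
      then show ?thesis by (subst prod_std_moment_eq_0[where j = j]) (auto simp: std_moment_def)
    qed
  qed
  finally show "(\<integral>u. u$j * (u$k * (u$l * u$l)) \<partial>s) = (if j = k then if j = l then \<kappa> else 1 else 0)" .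
qed

lemma power2_norm_vec: "(norm (x::real^'d::finite))^2 = (\<Sum>i\<in>UNIV. (x$i)^2)"
  unfolding power2_norm_eq_inner inner_vec_def by (simp add: power2_eq_square)

lemma standardized_weight_moment0:
  assumes std: "standardized s \<kappa>"
  shows "integrable s (\<lambda>u::real^'d::finite. 1 + (norm u)^2)"
    and "(\<integral>u. 1 + (norm u)^2 \<partial>s) = 1 + real CARD('d)"
proof -
  interpret prob_space s using std by (rule standardized_prob_space)
  have sq: "integrable s (\<lambda>u::real^'d. u$l * u$l)" "(\<integral>u. u$l * u$l \<partial>s) = 1" for l
    using standardized_moment2[OF std, of l l] by auto
  show "integrable s (\<lambda>u::real^'d. 1 + (norm u)^2)"
    unfolding power2_norm_vec by (simp add: power2_eq_square sq)
  show "(\<integral>u. 1 + (norm u)^2 \<partial>s) = 1 + real CARD('d)"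
    unfolding power2_norm_vec by (simp add: power2_eq_square sq integral_sum prob_space)
qed

lemma standardized_weight_moment1:
  assumes std: "standardized s \<kappa>"
  shows "integrable s (\<lambda>u::real^'d::finite. u$j * (1 + (norm u)^2))"
    and "(\<integral>u. u$j * (1 + (norm u)^2) \<partial>s) = 0"
proof -
  have expand: "(\<lambda>u::real^'d. u$j * (1 + (norm u)^2)) = (\<lambda>u. u$j + (\<Sum>l\<in>UNIV. u$j * (u$l * u$l)))"
    unfolding power2_norm_vec by (auto simp: power2_eq_square algebra_simps sum_distrib_left)
  show "integrable s (\<lambda>u::real^'d. u$j * (1 + (norm u)^2))"
    unfolding expand using standardized_moment1[OF std] standardized_moment3[OF std] by auto
  show "(\<integral>u. u$j * (1 + (norm u)^2) \<partial>s) = 0"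
    unfolding expand using standardized_moment1[OF std] standardized_moment3[OF std]
    by (simp add: integral_sum)
qed

lemma standardized_weight_moment2:
  assumes std: "standardized s \<kappa>"
  shows "integrable s (\<lambda>u::real^'d::finite. u$j * u$k * (1 + (norm u)^2))"
    and "(\<integral>u. u$j * u$k * (1 + (norm u)^2) \<partial>s) = (if j = k then real CARD('d) + \<kappa> else 0)"
proof -
  have expand: "(\<lambda>u::real^'d. u$j * u$k * (1 + (norm u)^2)) =
      (\<lambda>u. u$j * u$k + (\<Sum>l\<in>UNIV. u$j * (u$k * (u$l * u$l))))"
    unfolding power2_norm_vec by (auto simp: power2_eq_square algebra_simps sum_distrib_left)
  show "integrable s (\<lambda>u::real^'d. u$j * u$k * (1 + (norm u)^2))"
    unfolding expand using standardized_moment2[OF std] standardized_moment4[OF std] by auto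
  have "(\<integral>u. u$j * u$k * (1 + (norm u)^2) \<partial>s) =
      (if j = k then 1 else 0) + (\<Sum>l\<in>UNIV. if j = k then if j = l then \<kappa> else 1 else 0)"
    unfolding expand using standardized_moment2[OF std] standardized_moment4[OF std]
    by (simp add: integral_sum)
  also have "\<dots> = (if j = k then real CARD('d) + \<kappa> else 0)"
  proof (cases "j = k")
    case True
    have "(\<Sum>l\<in>UNIV. if j = l then \<kappa> else 1) = (\<Sum>l\<in>(UNIV::'d set). 1 + (if j = l then \<kappa> - 1 else 0))"
      by (intro sum.cong) auto
    then show ?thesis using True by (simp add: sum.distrib)
  qed simp
  finally show "(\<integral>u. u$j * u$k * (1 + (norm u)^2) \<partial>s) = (if j = k then real CARD('d) + \<kappa> else 0)" .
qed

lemma standardized_affine_square_weight_moment: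
  fixes \<beta> :: "real^'d::finite"
  assumes std: "standardized s \<kappa>"
  shows "integrable s (\<lambda>u. (\<alpha> + \<beta> \<bullet> u)^2 * (1 + (norm u)^2))"
    and "(\<integral>u. (\<alpha> + \<beta> \<bullet> u)^2 * (1 + (norm u)^2) \<partial>s)
       = (1 + real CARD('d)) * \<alpha>^2 + (real CARD('d) + \<kappa>) * (norm \<beta>)^2"
proof -
  have expand: "(\<lambda>u::real^'d. (\<alpha> + \<beta> \<bullet> u)^2 * (1 + (norm u)^2)) =
     (\<lambda>u. \<alpha>^2 * (1 + (norm u)^2) + ((\<Sum>j\<in>UNIV. (2 * \<alpha> * \<beta>$j) * (u$j * (1 + (norm u)^2))) +
        (\<Sum>j\<in>UNIV. \<Sum>k\<in>UNIV. (\<beta>$j * \<beta>$k) * (u$j * u$k * (1 + (norm u)^2)))))"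
    by (auto simp: inner_vec_def power2_eq_square algebra_simps sum_distrib_left sum_distrib_right
        sum.distrib intro!: ext)
  note moments = standardized_weight_moment0[OF std] standardized_weight_moment1[OF std]
    standardized_weight_moment2[OF std]
  show "integrable s (\<lambda>u. (\<alpha> + \<beta> \<bullet> u)^2 * (1 + (norm u)^2))"
    unfolding expand using moments by auto
  have "(\<integral>u. (\<alpha> + \<beta> \<bullet> u)^2 * (1 + (norm u)^2) \<partial>s) =
      \<alpha>^2 * (1 + real CARD('d)) + (\<Sum>j\<in>UNIV. \<Sum>k\<in>UNIV. (\<beta>$j * \<beta>$k) * (if j = k then real CARD('d) + \<kappa> else 0))"
    unfolding expand using moments by (simp add: integral_sum)
  also have "\<dots> = (1 + real CARD('d)) * \<alpha>^2 + (real CARD('d) + \<kappa>) * (norm \<beta>)^2"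
    unfolding power2_norm_vec
    by (simp add: if_distrib sum_distrib_left power2_eq_square mult_ac cong: if_cong)
  finally show "(\<integral>u. (\<alpha> + \<beta> \<bullet> u)^2 * (1 + (norm u)^2) \<partial>s)
       = (1 + real CARD('d)) * \<alpha>^2 + (real CARD('d) + \<kappa>) * (norm \<beta>)^2" .
qed

section \<open>Gradients with respect to the affine parameters\<close>

lemma grad_eqI: "GDERIV f x :> D \<Longrightarrow> grad f x = D"
  unfolding grad_def
proof (rule the_equality)
  fix D' assume "GDERIV f x :> D" and "GDERIV f x :> D'"
  then have "(\<lambda>h. h \<bullet> D') = (\<lambda>h. h \<bullet> D)"
    unfolding gderiv_def using has_derivative_unique by blast
  then have "(D' - D) \<bullet> D' = (D' - D) \<bullet> D" by metis
  then have "(D' - D) \<bullet> (D' - D) = 0" by (simp add: inner_diff_right)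
  then show "D' = D" by simp
qed

lemma symmetric_mat_inner: "symmetric_mat M \<Longrightarrow> x \<bullet> (M *v y) = (M *v x) \<bullet> y"
  unfolding symmetric_mat_def
  by (metis dot_lmul_matrix transpose_transpose vector_transpose_matrix)

definition centered_quadratic :: "real^'d::finite^'d \<Rightarrow> real^'d \<Rightarrow> real^'d \<Rightarrow> real" where
  "centered_quadratic M z0 z = (z - z0) \<bullet> (M *v (z - z0)) / 2"

lemma has_gderiv_centered_quadratic:
  assumes "symmetric_mat M"
  shows "GDERIV (centered_quadratic M z0) z :> M *v (z - z0)"
proof -
  have "((\<lambda>z. (z - z0) \<bullet> (M *v (z - z0)) / 2) has_derivative
      (\<lambda>h. (h \<bullet> (M *v (z - z0)) + (z - z0) \<bullet> (M *v h)) / 2)) (at z)"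
    by (auto intro!: derivative_eq_intros bounded_linear.has_derivative[OF matrix_vector_mul_bounded_linear]
        simp: matrix_vector_mult_diff_distrib)
  moreover have "(h \<bullet> (M *v (z - z0)) + (z - z0) \<bullet> (M *v h)) / 2 = h \<bullet> (M *v (z - z0))" for h
    using symmetric_mat_inner[OF assms, of "z - z0" h] by (simp add: inner_commute)
  ultimately show ?thesis
    unfolding gderiv_def centered_quadratic_def by simp
qed

lemma grad_centered_quadratic:
  "symmetric_mat M \<Longrightarrow> grad (centered_quadratic M z0) z = M *v (z - z0)"
  by (rule grad_eqI) (rule has_gderiv_centered_quadratic)

lemma bounded_linear_matrix_vector_left:
  "bounded_linear (\<lambda>A::real^'n::finite^'m::finite. A *v u)"
  unfolding linear_conv_bounded_linear[symmetric]
  by (rule linearI) (auto simp: matrix_vector_mult_add_rdistrib scaleR_matrix_vector_assoc)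

lemma bounded_linear_T_aff: "bounded_linear (\<lambda>w::(real^'d::finite) \<times> (real^'d^'d). T_aff w u)"
  unfolding T_aff_def
  by (intro bounded_linear_add bounded_linear_compose[OF bounded_linear_matrix_vector_left bounded_linear_snd]
      bounded_linear_fst)

text \<open>The gradient of \<open>(m, C) \<mapsto> f (C u + m)\<close> when \<open>f\<close> has gradient \<open>v\<close> at \<open>C u + m\<close>:
  the pair \<open>(v, v u\<^sup>T)\<close>.\<close>
definition param_grad :: "real^'d::finite \<Rightarrow> real^'d \<Rightarrow> (real^'d) \<times> (real^'d^'d)" where
  "param_grad v u = (v, \<chi> i j. v$i * u$j)"

lemma inner_matrix_vector_mult: "(H *v u) \<bullet> v = H \<bullet> (\<chi> i j. v$i * u$j)"
  for H :: "real^'d::finite^'d"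
  by (simp add: inner_vec_def matrix_vector_mult_def sum_distrib_right sum_distrib_left mult_ac)

lemma grad_w_chain:
  assumes "GDERIV f (T_aff w u) :> v"
  shows "grad_w f w u = param_grad v u"
proof -
  have "((\<lambda>w'. T_aff w' u) has_derivative (\<lambda>h. T_aff h u)) (at w)"
    by (rule bounded_linear.has_derivative[OF bounded_linear_T_aff]) simp
  moreover have "(f has_derivative (\<lambda>h. h \<bullet> v)) (at (T_aff w u))"
    using assms unfolding gderiv_def .
  ultimately have "((\<lambda>w'. f (T_aff w' u)) has_derivative (\<lambda>h. T_aff h u \<bullet> v)) (at w)"
    using diff_chain_at by (auto simp: comp_def)
  moreover have "T_aff h u \<bullet> v = h \<bullet> param_grad v u" for h
    by (cases h) (simp add: T_aff_def param_grad_def inner_add_left inner_matrix_vector_mult)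
  ultimately show ?thesis
    unfolding grad_w_def gderiv_def by (intro grad_eqI) (simp add: gderiv_def)
qed

lemma power2_norm_matrix:
  "(norm (A::real^'n::finite^'m::finite))^2 = (\<Sum>i\<in>UNIV. \<Sum>j\<in>UNIV. (A$i$j)^2)"
  unfolding power2_norm_eq_inner inner_vec_def by (simp add: power2_eq_square)

lemma power2_norm_param_grad:
  fixes v u :: "real^'d::finite"
  shows "(norm (param_grad v u))^2 = (norm v)^2 * (1 + (norm u)^2)"
proof -
  have "(norm (param_grad v u))^2 = (norm v)^2 + (norm (\<chi> i j. v$i * u$j :: real^'d^'d))^2"
    by (simp add: param_grad_def norm_Pair)
  also have "\<dots> = (\<Sum>i\<in>UNIV. (v$i)^2) + (\<Sum>i\<in>UNIV. \<Sum>j\<in>UNIV. (v$i)^2 * (u$j)^2)"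
    unfolding power2_norm_vec power2_norm_matrix by (simp add: power_mult_distrib)
  also have "\<dots> = (norm v)^2 * (1 + (norm u)^2)"
    unfolding power2_norm_vec by (simp add: sum_distrib_left sum_distrib_right algebra_simps)
  finally show ?thesis .
qed

lemma norm_eq_frob_norm: "norm A = frob_norm A"
  unfolding frob_norm_def power2_norm_matrix[symmetric] by simp

section \<open>Moments of the estimator\<close>

lemma (in finite_measure) integrable_if_norm_square_integrable:
  fixes f :: "'a \<Rightarrow> 'b::{banach, second_countable_topology}"
  assumes "f \<in> borel_measurable M" and "integrable M (\<lambda>x. (norm (f x))^2)"
  shows "integrable M f"
proof -
  have "integrable M (\<lambda>x. norm (f x))"
    by (rule square_integrable_imp_integrable[OF measurable_compose[OF assms(1) borel_measurable_norm] assms(2)])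
  then show ?thesis
    using assms(1) by (simp add: integrable_norm_iff)
qed

lemma standardized_power2_norm_param_grad:
  fixes a :: "real^'d::finite" and B :: "real^'d^'d"
  assumes std: "standardized s \<kappa>"
  shows "integrable s (\<lambda>u. (norm (param_grad (a + B *v u) u))^2)"
    and "(\<integral>u. (norm (param_grad (a + B *v u) u))^2 \<partial>s)
       = (1 + real CARD('d)) * (norm a)^2 + (real CARD('d) + \<kappa>) * (norm B)^2"
proof -
  have expand: "(norm (param_grad (a + B *v u) u))^2 = (\<Sum>i\<in>UNIV. (a$i + B$i \<bullet> u)^2 * (1 + (norm u)^2))"
    for u
    unfolding power2_norm_param_grad by (subst power2_norm_vec) (simp add: matrix_vector_mul_component sum_distrib_right)
  note row = standardized_affine_square_weight_moment[OF std]
  show "integrable s (\<lambda>u. (norm (param_grad (a + B *v u) u))^2)"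
    unfolding expand by (intro Bochner_Integration.integrable_sum row(1))
  have "(\<integral>u. (norm (param_grad (a + B *v u) u))^2 \<partial>s)
      = (\<Sum>i\<in>UNIV. (1 + real CARD('d)) * (a$i)^2 + (real CARD('d) + \<kappa>) * (norm (B$i))^2)"
    unfolding expand by (simp add: integral_sum row)
  also have "\<dots> = (1 + real CARD('d)) * (norm a)^2 + (real CARD('d) + \<kappa>) * (norm B)^2"
    unfolding power2_norm_vec power2_norm_matrix by (simp add: sum.distrib sum_distrib_left)
  finally show "(\<integral>u. (norm (param_grad (a + B *v u) u))^2 \<partial>s)
       = (1 + real CARD('d)) * (norm a)^2 + (real CARD('d) + \<kappa>) * (norm B)^2" .
qed

lemma standardized_integral_affine:
  fixes \<beta> :: "real^'d::finite"
  assumes std: "standardized s \<kappa>"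
  shows "(\<integral>u. \<alpha> + \<beta> \<bullet> u \<partial>s) = \<alpha>"
proof -
  interpret prob_space s using std by (rule standardized_prob_space)
  show ?thesis
    unfolding inner_vec_def using standardized_moment1[OF std]
    by (simp add: integral_sum prob_space)
qed

lemma standardized_integral_affine_times_coord:
  fixes \<beta> :: "real^'d::finite"
  assumes std: "standardized s \<kappa>"
  shows "(\<integral>u. (\<alpha> + \<beta> \<bullet> u) * u$j \<partial>s) = \<beta>$j"
proof -
  have "(\<integral>u. (\<alpha> + \<beta> \<bullet> u) * u$j \<partial>s) = (\<integral>u. \<alpha> * u$j + (\<Sum>k\<in>UNIV. \<beta>$k * (u$k * u$j)) \<partial>s)"
    by (simp add: inner_vec_def distrib_right sum_distrib_right mult.assoc)
  also have "\<dots> = (\<Sum>k\<in>UNIV. \<beta>$k * (if k = j then 1 else 0))"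
    using standardized_moment1[OF std] standardized_moment2[OF std] by (simp add: integral_sum)
  also have "\<dots> = \<beta>$j"
    by (simp add: if_distrib cong: if_cong)
  finally show ?thesis .
qed

lemma standardized_integral_param_grad:
  fixes a :: "real^'d::finite" and B :: "real^'d^'d"
  assumes std: "standardized s \<kappa>"
  shows "integrable s (\<lambda>u. param_grad (a + B *v u) u)"
    and "(\<integral>u. param_grad (a + B *v u) u \<partial>s) = (a, B)"
proof -
  interpret prob_space s using std by (rule standardized_prob_space)
  have "sets s = sets borel" using std by (simp add: standardized_def)
  moreover have "continuous_on UNIV (\<lambda>u. param_grad (a + B *v u) u)"
    unfolding param_grad_def
    by (intro continuous_intros linear_continuous_on matrix_vector_mul_bounded_linear)
  ultimately have "(\<lambda>u. param_grad (a + B *v u) u) \<in> borel_measurable s"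
    by (rule measurable_continuous_sets_borel)
  then show int: "integrable s (\<lambda>u. param_grad (a + B *v u) u)"
    by (rule integrable_if_norm_square_integrable[OF _ standardized_power2_norm_param_grad(1)[OF std]])
  have "fst (\<integral>u. param_grad (a + B *v u) u \<partial>s) $ i = (\<integral>u. fst (param_grad (a + B *v u) u) $ i \<partial>s)"
    for i
    by (rule integral_bounded_linear[OF bounded_linear_compose[OF bounded_linear_vec_nth bounded_linear_fst]
          int, symmetric])
  moreover have "(\<integral>u. fst (param_grad (a + B *v u) u) $ i \<partial>s) = a$i" for i
    unfolding param_grad_def fst_conv vector_add_component matrix_vector_mul_component
    by (rule standardized_integral_affine[OF std])
  moreover have "snd (\<integral>u. param_grad (a + B *v u) u \<partial>s) $ i $ j
      = (\<integral>u. snd (param_grad (a + B *v u) u) $ i $ j \<partial>s)" for i j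
    by (rule integral_bounded_linear[OF bounded_linear_compose[OF bounded_linear_vec_nth
          bounded_linear_compose[OF bounded_linear_vec_nth bounded_linear_snd]] int, symmetric])
  moreover have "(\<integral>u. snd (param_grad (a + B *v u) u) $ i $ j \<partial>s) = B$i$j" for i j
    unfolding param_grad_def snd_conv vec_lambda_beta vector_add_component matrix_vector_mul_component
    by (rule standardized_integral_affine_times_coord[OF std])
  ultimately show "(\<integral>u. param_grad (a + B *v u) u \<partial>s) = (a, B)"
    by (simp add: prod_eq_iff vec_eq_iff)
qed

section \<open>The trace of the variance\<close>

lemma power2_norm_sum_le_inverse_weighted:
  fixes x :: "'k \<Rightarrow> 'a::real_normed_vector"
  assumes "sum p I = 1" and "\<And>n. n \<in> I \<Longrightarrow> p n > 0"
  shows "(norm (\<Sum>n\<in>I. x n))^2 \<le> (\<Sum>n\<in>I. (norm (x n))^2 / p n)"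
proof -
  have "(\<Sum>n\<in>I. norm (x n)) = (\<Sum>n\<in>I. sqrt (p n) * (norm (x n) / sqrt (p n)))"
    using assms(2) by (intro sum.cong) (auto simp: less_imp_neq[symmetric])
  then have "norm (\<Sum>n\<in>I. x n) \<le> (\<Sum>n\<in>I. sqrt (p n) * (norm (x n) / sqrt (p n)))"
    using norm_sum[of x I] by simp
  then have "(norm (\<Sum>n\<in>I. x n))^2 \<le> (\<Sum>n\<in>I. sqrt (p n) * (norm (x n) / sqrt (p n)))^2"
    by (simp add: power_mono)
  also have "\<dots> \<le> (\<Sum>n\<in>I. (sqrt (p n))^2) * (\<Sum>n\<in>I. (norm (x n) / sqrt (p n))^2)"
    by (rule Cauchy_Schwarz_ineq_sum)
  also have "\<dots> = (\<Sum>n\<in>I. (norm (x n))^2 / p n)"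
    using assms by (simp add: power_divide less_imp_le cong: sum.cong)
  finally show ?thesis .
qed

lemma trace_var_inverse_scaled:
  fixes G :: "'k::finite \<Rightarrow> real^'d::finite \<Rightarrow> (real^'d) \<times> (real^'d^'d)"
  assumes "\<And>n. p n \<noteq> 0"
  shows "trace_var s p (\<lambda>u n. (1 / p n) *\<^sub>R G n u)
    = (\<Sum>n\<in>UNIV. (\<integral>u. (norm (G n u))^2 \<partial>s) / p n) - (norm (\<Sum>n\<in>UNIV. \<integral>u. G n u \<partial>s))^2"
proof -
  have "p n * (\<integral>u. (norm ((1 / p n) *\<^sub>R G n u))^2 \<partial>s) = (\<integral>u. (norm (G n u))^2 \<partial>s) / p n" for n
    using assms[of n] by (simp add: power_divide power2_eq_square)
  moreover have "p n *\<^sub>R (\<integral>u. (1 / p n) *\<^sub>R G n u \<partial>s) = (\<integral>u. G n u \<partial>s)" for n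
    using assms[of n] by simp
  ultimately show ?thesis
    unfolding trace_var_def by simp
qed

lemma differentiable_centered_quadratic:
  "symmetric_mat M \<Longrightarrow> centered_quadratic M z0 differentiable (at z)"
  using has_gderiv_centered_quadratic unfolding gderiv_def by (rule differentiableI)

lemma matrix_smooth_centered_quadratic:
  "symmetric_mat M \<Longrightarrow> matrix_smooth M (centered_quadratic M z0)"
  by (simp add: matrix_smooth_def grad_centered_quadratic matrix_vector_mult_diff_distrib[symmetric])

lemma estimator_centered_quadratic:
  assumes "\<forall>n. symmetric_mat (M n)"
  shows "estimator (\<lambda>n. centered_quadratic (M n) (z0 n)) p (m, C)
    = (\<lambda>u n. (1 / p n) *\<^sub>R param_grad (M n *v (m - z0 n) + (M n ** C) *v u) u)"
proof (intro ext)
  fix u n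
  have "M n *v (T_aff (m, C) u - z0 n) = M n *v (m - z0 n) + (M n ** C) *v u"
    by (simp add: T_aff_def algebra_simps matrix_vector_right_distrib matrix_vector_mul_assoc
        matrix_vector_mult_diff_distrib)
  then show "estimator (\<lambda>n. centered_quadratic (M n) (z0 n)) p (m, C) u n
      = (1 / p n) *\<^sub>R param_grad (M n *v (m - z0 n) + (M n ** C) *v u) u"
    unfolding estimator_def grad_w_chain[OF has_gderiv_centered_quadratic[OF assms[rule_format]]] by simp
qed

lemma trace_var_estimator_centered_quadratic:
  fixes M :: "'k::finite \<Rightarrow> real^'d::finite^'d"
  assumes "\<forall>n. symmetric_mat (M n)" and std: "standardized s \<kappa>" and "\<And>n. p n \<noteq> 0"
  shows "trace_var s p (estimator (\<lambda>n. centered_quadratic (M n) (z0 n)) p (m, C))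
    = (\<Sum>n\<in>UNIV. ((1 + real CARD('d)) * (norm (M n *v (m - z0 n)))^2
          + (real CARD('d) + \<kappa>) * (norm (M n ** C))^2) / p n)
      - (norm (\<Sum>n\<in>UNIV. (M n *v (m - z0 n), M n ** C)))^2"
  unfolding estimator_centered_quadratic[OF assms(1)] trace_var_inverse_scaled[OF assms(3)]
    standardized_power2_norm_param_grad(2)[OF std] standardized_integral_param_grad(2)[OF std] ..

theorem theorem4:
  fixes M :: "'k::finite \<Rightarrow> real^'d^'d" and zbar :: "'k \<Rightarrow> real^'d"
  assumes "\<forall>n. symmetric_mat (M n)"
  shows "\<exists>f :: 'k \<Rightarrow> real^'d \<Rightarrow> real.
    (\<forall>n. (\<forall>z. f n differentiable (at z)) \<and> matrix_smooth (M n) (f n) \<and> grad (f n) (zbar n) = 0) \<and>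
    (\<forall>s \<kappa> p m C. standardized s \<kappa> \<and> pos_distribution p \<longrightarrow>
       (\<forall>n. integrable s (\<lambda>u. estimator f p (m, C) u n) \<and>
            integrable s (\<lambda>u. (norm (estimator f p (m, C) u n))^2)) \<and>
       trace_var s p (estimator f p (m, C)) \<ge>
         (\<Sum>n\<in>UNIV. (1 / p n) * (real CARD('d) * (norm (M n *v (m - zbar n)))^2
            + (real CARD('d) + \<kappa> - 1) * (frob_norm (M n ** C))^2)))"
proof (intro exI[of _ "\<lambda>n. centered_quadratic (M n) (zbar n)"] conjI allI impI)
  fix n z
  show "centered_quadratic (M n) (zbar n) differentiable (at z)"
    and "matrix_smooth (M n) (centered_quadratic (M n) (zbar n))"
    and "grad (centered_quadratic (M n) (zbar n)) (zbar n) = 0"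
    using assms by (simp_all add: differentiable_centered_quadratic matrix_smooth_centered_quadratic
        grad_centered_quadratic)
next
  fix s :: "(real^'d) measure" and \<kappa> :: real and p :: "'k \<Rightarrow> real" and m :: "real^'d"
    and C :: "real^'d^'d"
  assume "standardized s \<kappa> \<and> pos_distribution p"
  then have std: "standardized s \<kappa>" and p_pos: "\<And>n. p n > 0" and p_sum: "sum p UNIV = 1"
    by (auto simp: pos_distribution_def)
  then have p_nonzero: "p n \<noteq> 0" for n
    by (simp add: less_imp_neq[symmetric])
  show "integrable s (\<lambda>u. estimator (\<lambda>n. centered_quadratic (M n) (zbar n)) p (m, C) u n)"
    and "integrable s (\<lambda>u. (norm (estimator (\<lambda>n. centered_quadratic (M n) (zbar n)) p (m, C) u n))^2)" for n
    unfolding estimator_centered_quadratic[OF assms]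
    using standardized_integral_param_grad(1)[OF std] standardized_power2_norm_param_grad(1)[OF std]
    by (simp_all add: power_divide)
  let ?a = "\<lambda>n. M n *v (m - zbar n)" and ?B = "\<lambda>n. M n ** C"
  have "(norm (\<Sum>n\<in>UNIV. (?a n, ?B n)))^2 \<le> (\<Sum>n\<in>UNIV. ((norm (?a n))^2 + (norm (?B n))^2) / p n)"
    using power2_norm_sum_le_inverse_weighted[OF p_sum p_pos, of "\<lambda>n. (?a n, ?B n)"]
    by (simp add: norm_Pair)
  moreover have "(\<Sum>n\<in>UNIV. (1 / p n) * (real CARD('d) * (norm (?a n))^2
      + (real CARD('d) + \<kappa> - 1) * (frob_norm (?B n))^2))
    = (\<Sum>n\<in>UNIV. ((1 + real CARD('d)) * (norm (?a n))^2 + (real CARD('d) + \<kappa>) * (norm (?B n))^2) / p n)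
      - (\<Sum>n\<in>UNIV. ((norm (?a n))^2 + (norm (?B n))^2) / p n)"
    unfolding norm_eq_frob_norm[symmetric] sum_subtractf[symmetric]
    by (intro sum.cong) (simp_all add: field_simps p_nonzero)
  ultimately show "trace_var s p (estimator (\<lambda>n. centered_quadratic (M n) (zbar n)) p (m, C)) \<ge>
      (\<Sum>n\<in>UNIV. (1 / p n) * (real CARD('d) * (norm (M n *v (m - zbar n)))^2
            + (real CARD('d) + \<kappa> - 1) * (frob_norm (M n ** C))^2))"
    unfolding trace_var_estimator_centered_quadratic[OF assms std p_nonzero] by linarith
qed

end
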